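(* Let $\beta>0$, $\gamma\ge0$, $\mu_c,\mu_d,\varphi\in\mathbb R$, $\sigma,\sigma_c,\sigma_d>0$ and $-1<\rho<1$. Let $\{(\xi_t,\epsilon_t,\eta_t)\}_{t\ge1}$ be iid standard normal in $\mathbb R^3$, let $X_{t+1}=\rho X_t+\sigma\eta_{t+1}$ with $X_0\sim N(0,\sigma^2/(1-\rho^2))$ independent of the shocks, and $$\Phi_{t+1}=\beta\exp\{(\mu_d+\varphi X_t+\sigma_d\xi_{t+1})-\gamma(\mu_c+X_t+\sigma_c\epsilon_{t+1})\}.$$ Then for every $p\ge1$ the limit $\mathcal L_\Phi^p$ exists and $$\mathcal L_\Phi^p=\ln\beta+\mu_d-\gamma\mu_c+\frac{\sigma^2}{2}\frac{(\varphi-\gamma)^2}{(1-\rho)^2}+\frac{\sigma_d^2+(\gamma\sigma_c)^2}{2}.$$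
   Context: $\mathcal L_\Phi^p:=\lim_{n\to\infty}\frac{1}{np}\ln\int\big(\mathbb E_x\prod_{t=1}^n\Phi_t\big)^p\pi(dx)$, where $\mathbb E_x$ denotes expectation conditional on $X_0=x$ and $\pi=N(0,\sigma^2/(1-\rho^2))$ is the stationary law of $\{X_t\}$. *)

theory Defs
  imports "HOL-Probability.Probability"
begin

definition N01 :: "real measure" where
  "N01 = density lborel std_normal_density"

text \<open>Joint law of n iid shock triples (xi_{t+1}, eps_{t+1}, eta_{t+1}), t < n,
  each standard normal in R^3; w t = (xi_{t+1}, eps_{t+1}, eta_{t+1}).\<close>
definition shockM :: "nat \<Rightarrow> (nat \<Rightarrow> real \<times> real \<times> real) measure" where
  "shockM n = PiM {..<n} (\<lambda>_. N01 \<Otimes>\<^sub>M (N01 \<Otimes>\<^sub>M N01))"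

fun Xpath :: "real \<Rightarrow> real \<Rightarrow> real \<Rightarrow> (nat \<Rightarrow> real \<times> real \<times> real) \<Rightarrow> nat \<Rightarrow> real" where
  "Xpath \<rho> \<sigma> x w 0 = x"
| "Xpath \<rho> \<sigma> x w (Suc t) = \<rho> * Xpath \<rho> \<sigma> x w t + \<sigma> * snd (snd (w t))"

end

theory Submission imports Defs begin

text \<open>Both \<open>ln \<Phi>\<^sub>t\<close> and \<open>X\<^sub>t\<close> are affine in the initial state and the shocks, so
  \<open>\<Sum>\<^sub>t\<^sub><\<^sub>n ln \<Phi>\<^sub>t = n c + (\<phi> - \<gamma>) G\<^sub>n X\<^sub>0 + (a linear form in independent standard normals)\<close>
  with \<open>G\<^sub>m = 1 + \<rho> + \<dots> + \<rho>\<^sup>m\<^sup>-\<^sup>1\<close>. The Gaussian moment generating function gives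
  \<open>\<bbbE>\<^sub>x \<Prod>\<Phi>\<^sub>t\<close> in closed form: its variance part is \<open>\<sigma>\<^sup>2 (\<phi> - \<gamma>)\<^sup>2 / 2 \<Sum>\<^sub>k\<^sub><\<^sub>n G\<^sub>k\<^sup>2\<close>, which grows
  like \<open>n \<sigma>\<^sup>2 (\<phi> - \<gamma>)\<^sup>2 / (2 (1 - \<rho>)\<^sup>2)\<close>, while integrating the \<open>p\<close>-th power against \<open>\<pi>\<close>
  only adds the bounded term \<open>p\<^sup>2 (\<phi> - \<gamma>)\<^sup>2 G\<^sub>n\<^sup>2 Var \<pi> / 2\<close>, which vanishes after division by \<open>n p\<close>.\<close>

lemma
  fixes f :: "'a \<Rightarrow> real" and g :: "'b \<Rightarrow> real"
  assumes "sigma_finite_measure M1" "sigma_finite_measure M2"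
    and "integrable M1 f" "integrable M2 g"
  shows integrable_pair_measure_mult: "integrable (M1 \<Otimes>\<^sub>M M2) (\<lambda>z. f (fst z) * g (snd z))"
    and integral_pair_measure_mult:
      "(\<integral>z. f (fst z) * g (snd z) \<partial>(M1 \<Otimes>\<^sub>M M2)) = integral\<^sup>L M1 f * integral\<^sup>L M2 g"
proof -
  interpret pair_sigma_finite M1 M2
    by (simp add: pair_sigma_finite_def assms)
  have [measurable]: "f \<in> borel_measurable M1" "g \<in> borel_measurable M2"
    using assms by auto
  show int: "integrable (M1 \<Otimes>\<^sub>M M2) (\<lambda>z. f (fst z) * g (snd z))"
  proof (rule Fubini_integrable)
    have "integrable M1 (\<lambda>x. \<bar>f x\<bar> * (\<integral>y. \<bar>g y\<bar> \<partial>M2))"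
      using assms(3) by (intro integrable_mult_left) auto
    then show "integrable M1 (\<lambda>x. \<integral>y. norm (f (fst (x, y)) * g (snd (x, y))) \<partial>M2)"
      by (simp add: abs_mult)
  qed (use assms(4) in auto)
  show "(\<integral>z. f (fst z) * g (snd z) \<partial>(M1 \<Otimes>\<^sub>M M2)) = integral\<^sup>L M1 f * integral\<^sup>L M2 g"
    using integral_fst'[OF int, symmetric] by simp
qed

lemma
  fixes a s :: real
  assumes "s > 0"
  shows integrable_normal_exp: "integrable (density lborel (normal_density 0 s)) (\<lambda>x. exp (a * x))"
    and integral_normal_exp:
      "(\<integral>x. exp (a * x) \<partial>density lborel (normal_density 0 s)) = exp ((a * s)\<^sup>2 / 2)"
proof -
  have tilt: "normal_density 0 s x * exp (a * x) = exp ((a * s)\<^sup>2 / 2) * normal_density (a * s\<^sup>2) s x"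
    for x
  proof -
    have "- (x - 0)\<^sup>2 / (2 * s\<^sup>2) + a * x = (a * s)\<^sup>2 / 2 + - (x - a * s\<^sup>2)\<^sup>2 / (2 * s\<^sup>2)"
      using assms by (simp add: field_simps power2_eq_square)
    then show ?thesis
      unfolding normal_density_def by (simp add: exp_add[symmetric] mult_ac)
  qed
  show "integrable (density lborel (normal_density 0 s)) (\<lambda>x. exp (a * x))"
    using integrable_normal_density[OF assms]
    by (subst integrable_real_density) (auto simp: tilt)
  show "(\<integral>x. exp (a * x) \<partial>density lborel (normal_density 0 s)) = exp ((a * s)\<^sup>2 / 2)"
    by (subst integral_real_density) (auto simp: tilt integral_normal_density[OF assms])
qed

lemma integral_normal_exp_affine_powr:
  fixes A B p s :: real
  assumes "s > 0"
  shows "(\<integral>x. exp (A + B * x) powr p \<partial>density lborel (normal_density 0 s))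
       = exp (p * A + (p * B * s)\<^sup>2 / 2)"
proof -
  have "exp (A + B * x) powr p = exp (p * A) * exp ((p * B) * x)" for x
    by (simp add: exp_powr_real exp_add[symmetric] algebra_simps)
  then show ?thesis
    using integral_normal_exp[OF assms, of "p * B"] by (simp add: exp_add)
qed

lemma prob_space_N01: "prob_space N01"
  unfolding N01_def by (rule prob_space_normal_density) simp

lemma prob_space_N01_cube: "prob_space (N01 \<Otimes>\<^sub>M (N01 \<Otimes>\<^sub>M N01))"
  by (intro prob_space_pair prob_space_N01)

lemma
  fixes a b c :: real
  shows integrable_N01_cube_exp_linear:
      "integrable (N01 \<Otimes>\<^sub>M (N01 \<Otimes>\<^sub>M N01)) (\<lambda>z. exp (a * fst z + b * fst (snd z) + c * snd (snd z)))"
    and integral_N01_cube_exp_linear: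
      "(\<integral>z. exp (a * fst z + b * fst (snd z) + c * snd (snd z)) \<partial>(N01 \<Otimes>\<^sub>M (N01 \<Otimes>\<^sub>M N01)))
       = exp ((a\<^sup>2 + b\<^sup>2 + c\<^sup>2) / 2)"
proof -
  have N01_exp: "integrable N01 (\<lambda>x. exp (a * x))" "integral\<^sup>L N01 (\<lambda>x. exp (a * x)) = exp (a\<^sup>2 / 2)"
    for a :: real
    using integrable_normal_exp[of 1 a] integral_normal_exp[of 1 a] unfolding N01_def by auto
  have sf: "sigma_finite_measure N01" "sigma_finite_measure (N01 \<Otimes>\<^sub>M N01)"
    by (intro prob_space_imp_sigma_finite prob_space_pair prob_space_N01)+
  note inner = integrable_pair_measure_mult[OF sf(1) sf(1) N01_exp(1)[of b] N01_exp(1)[of c]]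
    integral_pair_measure_mult[OF sf(1) sf(1) N01_exp(1)[of b] N01_exp(1)[of c]]
  have split: "exp (a * fst z + b * fst (snd z) + c * snd (snd z))
      = exp (a * fst z) * (exp (b * fst (snd z)) * exp (c * snd (snd z)))" for z :: "real \<times> real \<times> real"
    by (simp add: exp_add)
  show "integrable (N01 \<Otimes>\<^sub>M (N01 \<Otimes>\<^sub>M N01)) (\<lambda>z. exp (a * fst z + b * fst (snd z) + c * snd (snd z)))"
    unfolding split by (rule integrable_pair_measure_mult[OF sf N01_exp(1) inner(1)])
  show "(\<integral>z. exp (a * fst z + b * fst (snd z) + c * snd (snd z)) \<partial>(N01 \<Otimes>\<^sub>M (N01 \<Otimes>\<^sub>M N01)))
       = exp ((a\<^sup>2 + b\<^sup>2 + c\<^sup>2) / 2)"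
    unfolding split integral_pair_measure_mult[OF sf N01_exp(1) inner(1)] inner(2) N01_exp(2)
    by (simp add: exp_add[symmetric] add_divide_distrib)
qed

lemma integral_shockM_exp_linear:
  fixes a b c :: "nat \<Rightarrow> real"
  shows "(\<integral>w. exp (\<Sum>s<n. a s * fst (w s) + b s * fst (snd (w s)) + c s * snd (snd (w s))) \<partial>shockM n)
       = exp (\<Sum>s<n. ((a s)\<^sup>2 + (b s)\<^sup>2 + (c s)\<^sup>2) / 2)"
proof -
  interpret product_sigma_finite "\<lambda>_::nat. N01 \<Otimes>\<^sub>M (N01 \<Otimes>\<^sub>M N01)"
    by (simp add: product_sigma_finite_def prob_space_imp_sigma_finite prob_space_N01_cube)
  show ?thesis
    unfolding exp_sum[OF finite_lessThan] shockM_def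
    by (subst product_integral_prod[where f = "\<lambda>s z. exp (a s * fst z + b s * fst (snd z) + c s * snd (snd z))"])
       (simp_all add: integrable_N01_cube_exp_linear integral_N01_cube_exp_linear)
qed

definition geom_sum :: "real \<Rightarrow> nat \<Rightarrow> real" where
  "geom_sum r m = (\<Sum>k<m. r ^ k)"

lemma geom_sum_Suc: "geom_sum r (Suc m) = geom_sum r m + r ^ m"
  by (simp add: geom_sum_def)

lemma Xpath_eq:
  "Xpath \<rho> \<sigma> x w t = \<rho> ^ t * x + \<sigma> * (\<Sum>s<t. \<rho> ^ (t - Suc s) * snd (snd (w s)))"
proof (induction t)
  case (Suc t)
  have "(\<Sum>s<Suc t. \<rho> ^ (Suc t - Suc s) * snd (snd (w s)))
      = \<rho> * (\<Sum>s<t. \<rho> ^ (t - Suc s) * snd (snd (w s))) + snd (snd (w t))"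
    by (simp add: sum_distrib_left mult.assoc[symmetric] Suc_diff_Suc power_Suc[symmetric]
        del: power_Suc)
  then show ?case
    using Suc by (simp add: algebra_simps)
qed simp

lemma sum_Xpath:
  "(\<Sum>t<n. Xpath \<rho> \<sigma> x w t)
   = geom_sum \<rho> n * x + \<sigma> * (\<Sum>s<n. geom_sum \<rho> (n - Suc s) * snd (snd (w s)))"
proof (induction n)
  case 0
  then show ?case by (simp add: geom_sum_def)
next
  case (Suc n)
  have "geom_sum \<rho> (Suc n - Suc s) = geom_sum \<rho> (n - Suc s) + \<rho> ^ (n - Suc s)" if "s < n" for s
    using that by (metis Suc_diff_Suc diff_Suc_Suc geom_sum_Suc)
  then have "(\<Sum>s<Suc n. geom_sum \<rho> (Suc n - Suc s) * snd (snd (w s)))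
      = (\<Sum>s<n. geom_sum \<rho> (n - Suc s) * snd (snd (w s)))
        + (\<Sum>s<n. \<rho> ^ (n - Suc s) * snd (snd (w s)))"
    by (simp add: geom_sum_def sum.distrib[symmetric] distrib_right)
  then show ?case
    using Suc by (simp add: Xpath_eq geom_sum_Suc algebra_simps)
qed

lemma prod_Phi_eq_exp:
  fixes \<beta> \<gamma> \<mu>c \<mu>d \<phi> \<sigma> \<sigma>c \<sigma>d \<rho> x :: real
  assumes "\<beta> > 0"
  shows "(\<Prod>t<n. \<beta> * exp ((\<mu>d + \<phi> * Xpath \<rho> \<sigma> x w t + \<sigma>d * fst (w t))
                          - \<gamma> * (\<mu>c + Xpath \<rho> \<sigma> x w t + \<sigma>c * fst (snd (w t)))))
    = exp (real n * (ln \<beta> + \<mu>d - \<gamma> * \<mu>c) + (\<phi> - \<gamma>) * geom_sum \<rho> n * x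
        + (\<Sum>s<n. \<sigma>d * fst (w s) + - (\<gamma> * \<sigma>c) * fst (snd (w s))
                    + (\<phi> - \<gamma>) * \<sigma> * geom_sum \<rho> (n - Suc s) * snd (snd (w s))))"
proof -
  have \<beta>_exp: "\<beta> * exp y = exp (ln \<beta> + y)" for y
    using assms by (simp add: exp_add)
  have "(\<Prod>t<n. \<beta> * exp ((\<mu>d + \<phi> * Xpath \<rho> \<sigma> x w t + \<sigma>d * fst (w t))
                          - \<gamma> * (\<mu>c + Xpath \<rho> \<sigma> x w t + \<sigma>c * fst (snd (w t)))))
      = exp (\<Sum>t<n. (ln \<beta> + \<mu>d - \<gamma> * \<mu>c) + (\<phi> - \<gamma>) * Xpath \<rho> \<sigma> x w t
                     + (\<sigma>d * fst (w t) + - (\<gamma> * \<sigma>c) * fst (snd (w t))))"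
    unfolding exp_sum[OF finite_lessThan] \<beta>_exp by (intro prod.cong) (simp_all add: algebra_simps)
  also have "\<dots> = exp (real n * (ln \<beta> + \<mu>d - \<gamma> * \<mu>c) + (\<phi> - \<gamma>) * (\<Sum>t<n. Xpath \<rho> \<sigma> x w t)
                    + (\<Sum>t<n. \<sigma>d * fst (w t) + - (\<gamma> * \<sigma>c) * fst (snd (w t))))"
    by (simp add: sum.distrib sum_distrib_left)
  also have "\<dots> = exp (real n * (ln \<beta> + \<mu>d - \<gamma> * \<mu>c) + (\<phi> - \<gamma>) * geom_sum \<rho> n * x
        + (\<Sum>s<n. \<sigma>d * fst (w s) + - (\<gamma> * \<sigma>c) * fst (snd (w s))
                    + (\<phi> - \<gamma>) * \<sigma> * geom_sum \<rho> (n - Suc s) * snd (snd (w s))))"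
    unfolding sum_Xpath by (simp add: sum.distrib sum_distrib_left mult.assoc add_ac distrib_left)
  finally show ?thesis .
qed

lemma integral_shockM_prod_Phi:
  fixes \<beta> \<gamma> \<mu>c \<mu>d \<phi> \<sigma> \<sigma>c \<sigma>d \<rho> x :: real
  assumes "\<beta> > 0"
  shows "(\<integral>w. (\<Prod>t<n. \<beta> * exp ((\<mu>d + \<phi> * Xpath \<rho> \<sigma> x w t + \<sigma>d * fst (w t))
                                  - \<gamma> * (\<mu>c + Xpath \<rho> \<sigma> x w t + \<sigma>c * fst (snd (w t)))))
            \<partial>shockM n)
    = exp (real n * (ln \<beta> + \<mu>d - \<gamma> * \<mu>c + (\<sigma>d\<^sup>2 + (\<gamma> * \<sigma>c)\<^sup>2) / 2)
           + ((\<phi> - \<gamma>) * \<sigma>)\<^sup>2 / 2 * (\<Sum>k<n. (geom_sum \<rho> k)\<^sup>2)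
           + (\<phi> - \<gamma>) * geom_sum \<rho> n * x)"
proof -
  have "(\<Sum>s<n. (\<sigma>d\<^sup>2 + (- (\<gamma> * \<sigma>c))\<^sup>2 + ((\<phi> - \<gamma>) * \<sigma> * geom_sum \<rho> (n - Suc s))\<^sup>2) / 2)
      = real n * ((\<sigma>d\<^sup>2 + (\<gamma> * \<sigma>c)\<^sup>2) / 2)
        + ((\<phi> - \<gamma>) * \<sigma>)\<^sup>2 / 2 * (\<Sum>s<n. (geom_sum \<rho> (n - Suc s))\<^sup>2)"
    by (simp add: add_divide_distrib sum.distrib sum_distrib_left power_mult_distrib)
  also have "(\<Sum>s<n. (geom_sum \<rho> (n - Suc s))\<^sup>2) = (\<Sum>k<n. (geom_sum \<rho> k)\<^sup>2)"
    by (rule sum.nat_diff_reindex)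
  finally have variance_sum:
    "(\<Sum>s<n. (\<sigma>d\<^sup>2 + (- (\<gamma> * \<sigma>c))\<^sup>2 + ((\<phi> - \<gamma>) * \<sigma> * geom_sum \<rho> (n - Suc s))\<^sup>2) / 2)
      = real n * ((\<sigma>d\<^sup>2 + (\<gamma> * \<sigma>c)\<^sup>2) / 2) + ((\<phi> - \<gamma>) * \<sigma>)\<^sup>2 / 2 * (\<Sum>k<n. (geom_sum \<rho> k)\<^sup>2)" .
  show ?thesis
    unfolding prod_Phi_eq_exp[OF assms] exp_add[of _ "sum _ _"] integral_mult_right_zero
      integral_shockM_exp_linear variance_sum
    by (simp add: exp_add[symmetric] algebra_simps)
qed

lemma geom_sum_LIMSEQ:
  assumes "\<bar>r\<bar> < 1"
  shows "geom_sum r \<longlonglongrightarrow> 1 / (1 - r)"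
  using geometric_sums[of r] assms unfolding sums_def geom_sum_def by simp

lemma cesaro_geom_sum_square:
  assumes "\<bar>r\<bar> < 1"
  shows "(\<lambda>n. (\<Sum>k<n. (geom_sum r k)\<^sup>2) / real n) \<longlonglongrightarrow> 1 / (1 - r)\<^sup>2"
proof -
  have r_neq_1: "r \<noteq> 1" using assms by auto
  have square: "(geom_sum r k)\<^sup>2 = (1 - 2 * r ^ k + (r\<^sup>2) ^ k) / (1 - r)\<^sup>2" for k
  proof -
    have "geom_sum r k = (1 - r ^ k) / (1 - r)"
      using r_neq_1 unfolding geom_sum_def sum_gp_strict by simp
    then show ?thesis
      by (simp add: power_divide power2_diff power_mult[symmetric] mult.commute)
  qed
  have sum_square: "(\<Sum>k<n. (geom_sum r k)\<^sup>2) = (real n - 2 * geom_sum r n + geom_sum (r\<^sup>2) n) / (1 - r)\<^sup>2"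
    for n
    unfolding square by (simp add: geom_sum_def sum_divide_distrib[symmetric] sum.distrib
        sum_subtractf sum_distrib_left)
  have "\<forall>\<^sub>F n in sequentially. (1 - 2 * (geom_sum r n * (1 / real n)) + geom_sum (r\<^sup>2) n * (1 / real n)) / (1 - r)\<^sup>2
      = (\<Sum>k<n. (geom_sum r k)\<^sup>2) / real n"
    using eventually_gt_at_top[of "0::nat"]
    by eventually_elim (simp add: sum_square field_simps)
  moreover have "(\<lambda>n. (1 - 2 * (geom_sum r n * (1 / real n)) + geom_sum (r\<^sup>2) n * (1 / real n)) / (1 - r)\<^sup>2)
      \<longlonglongrightarrow> (1 - 2 * (1 / (1 - r) * 0) + 1 / (1 - r\<^sup>2) * 0) / (1 - r)\<^sup>2"
    using assms abs_square_less_1[of r]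
    by (intro tendsto_intros geom_sum_LIMSEQ lim_1_over_n) auto
  ultimately show ?thesis
    by (simp add: tendsto_cong)
qed

theorem mainTheorem14:
  fixes \<beta> \<gamma> \<mu>c \<mu>d \<phi> \<sigma> \<sigma>c \<sigma>d \<rho> p :: real
  assumes "\<beta> > 0" "\<gamma> \<ge> 0" "\<sigma> > 0" "\<sigma>c > 0" "\<sigma>d > 0" "-1 < \<rho>" "\<rho> < 1" "p \<ge> 1"
  shows "(\<lambda>n. 1 / (real n * p) * ln (\<integral>x.
            (\<integral>w. (\<Prod>t<n. \<beta> * exp ((\<mu>d + \<phi> * Xpath \<rho> \<sigma> x w t + \<sigma>d * fst (w t))
                                  - \<gamma> * (\<mu>c + Xpath \<rho> \<sigma> x w t + \<sigma>c * fst (snd (w t)))))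
               \<partial>shockM n) powr p
          \<partial>density lborel (normal_density 0 (sqrt (\<sigma>\<^sup>2 / (1 - \<rho>\<^sup>2))))))
         \<longlonglongrightarrow> ln \<beta> + \<mu>d - \<gamma> * \<mu>c + \<sigma>\<^sup>2 / 2 * ((\<phi> - \<gamma>)\<^sup>2 / (1 - \<rho>)\<^sup>2)
             + (\<sigma>d\<^sup>2 + (\<gamma> * \<sigma>c)\<^sup>2) / 2"
proof -
  define c where "c = ln \<beta> + \<mu>d - \<gamma> * \<mu>c + (\<sigma>d\<^sup>2 + (\<gamma> * \<sigma>c)\<^sup>2) / 2"
  define s where "s = sqrt (\<sigma>\<^sup>2 / (1 - \<rho>\<^sup>2))"
  have \<rho>: "\<bar>\<rho>\<bar> < 1" using assms by auto
  have "s > 0"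
    using assms abs_square_less_1[of \<rho>] \<rho> unfolding s_def by simp
  have lim: "(\<lambda>n. c + ((\<phi> - \<gamma>) * \<sigma>)\<^sup>2 / 2 * ((\<Sum>k<n. (geom_sum \<rho> k)\<^sup>2) / real n)
        + p * ((\<phi> - \<gamma>) * s)\<^sup>2 / 2 * ((geom_sum \<rho> n)\<^sup>2 * (1 / real n)))
      \<longlonglongrightarrow> ln \<beta> + \<mu>d - \<gamma> * \<mu>c + \<sigma>\<^sup>2 / 2 * ((\<phi> - \<gamma>)\<^sup>2 / (1 - \<rho>)\<^sup>2) + (\<sigma>d\<^sup>2 + (\<gamma> * \<sigma>c)\<^sup>2) / 2"
    by (rule tendsto_eq_intros cesaro_geom_sum_square geom_sum_LIMSEQ lim_1_over_n \<rho> refl)+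
       (simp add: c_def power_mult_distrib)
  show ?thesis
    unfolding s_def[symmetric]
    by (rule Lim_transform_eventually[OF lim eventually_mono[OF eventually_gt_at_top[of "0::nat"]]],
        unfold integral_shockM_prod_Phi[OF \<open>\<beta> > 0\<close>] c_def[symmetric]
          integral_normal_exp_affine_powr[OF \<open>s > 0\<close>] ln_exp)
       (use \<open>p \<ge> 1\<close> in \<open>simp add: field_simps power2_eq_square\<close>)
qed

end
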